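(* Let $(X,V)$ and $(\overline{X},\overline{V})$ be global solutions of the discrete Motsch–Tadmor model (as in the context) whose initial data satisfy \[ \max\{\|\Delta^x(0)\|_F,\|\Delta^{\overline{x}}(0)\|_F\}<M,\quad \|\Delta^v(0)\|_F<\kappa\int_{\|\Delta^x(0)\|_F}^M\psi(s)\,ds,\quad \|\Delta^{\overline{v}}(0)\|_F<\kappa\int_{\|\Delta^{\overline{x}}(0)\|_F}^M\psi(s)\,ds. \] For $i,j\in\{1,\dots,N\}$ and $n\ge0$ let \[ \mathcal{I}_2^{ij}=h\kappa\sum_{l\ne i,j}\Big[\overline{\phi}_{il}(n)\big(\Delta^v_{li}(n)-\Delta^{\overline{v}}_{li}(n)\big)-\overline{\phi}_{jl}(n)\big(\Delta^v_{lj}(n)-\Delta^{\overline{v}}_{lj}(n)\big)\Big], \] and $\alpha(n)=\max_{1\le i,j\le N}(1-\overline{\phi}_{ij}(n)-\overline{\phi}_{ii}(n))^2$. Then \[ \sum_{i,j=1}^N\|\mathcal{I}_2^{ij}\|^2\le2h^2\kappa^2\Big(\alpha(n)+\frac{L_a^2M^2}{Nc_1^2}\Big(1+\frac{c_2}{c_1}\Big)^2\Big)\|\Delta^v(n)-\Delta^{\overline{v}}(n)\|_F^2 . \]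
   Context: Discrete MT model: fix $N\ge1$, $d\ge1$, $\kappa>0$, $h>0$, and $a:[0,\infty)\to\mathbb{R}$ with constants $0<c_1\le c_2$, $c_1\le a\le c_2$, $|a(r_1)-a(r_2)|\le L_a|r_1-r_2|$ ($L_a>0$); $0<h<\min\{1,1/\kappa\}$. A solution satisfies $x_i(n+1)=x_i(n)+hv_i(n)$, $v_i(n+1)=v_i(n)+h\kappa\sum_j\phi_{ij}(n)(v_j(n)-v_i(n))$ with $\phi_{ij}(n)=\frac{a(\|x_i(n)-x_j(n)\|)}{\sum_ka(\|x_i(n)-x_k(n)\|)}$; $\overline{\phi}_{ij}(n)$ is defined likewise from $\overline{X}(n)$. Notation: $\Delta^x_{ij}=x_i-x_j$, $\Delta^v_{ij}=v_i-v_j$, similarly $\Delta^{\overline{x}},\Delta^{\overline{v}}$; $\|A\|_F=(\sum_{i,j}\|A_{ij}\|^2)^{1/2}$. Constants: $\|\phi\|_{\mathrm{Lip}}=\frac{L_a}{Nc_1}(1+\frac{c_2}{c_1})$, $M=\frac{1}{4N\|\phi\|_{\mathrm{Lip}}}$, $\psi(s)=1-\|\phi\|_{\mathrm{Lip}}Ns$. *)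

theory Defs
  imports "HOL-Analysis.Analysis"
begin

text \<open>Agents are indexed by 0..N-1 (the paper's 1..N); time steps by nat.
  A trajectory is x :: nat \<Rightarrow> nat \<Rightarrow> real^'d, x n i = position of agent i at step n.\<close>

definition Delta :: "(nat \<Rightarrow> 'a::ab_group_add) \<Rightarrow> nat \<Rightarrow> nat \<Rightarrow> 'a" where
  "Delta x i j = x i - x j"

definition frobF :: "nat \<Rightarrow> (nat \<Rightarrow> nat \<Rightarrow> real^'d) \<Rightarrow> real" where
  "frobF N A = sqrt (\<Sum>i<N. \<Sum>j<N. (norm (A i j))\<^sup>2)"

definition MT_phi :: "nat \<Rightarrow> (real \<Rightarrow> real) \<Rightarrow> (nat \<Rightarrow> real^'d) \<Rightarrow> nat \<Rightarrow> nat \<Rightarrow> real" where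
  "MT_phi N a x i j = a (norm (x i - x j)) / (\<Sum>k<N. a (norm (x i - x k)))"

definition MT_solution :: "nat \<Rightarrow> real \<Rightarrow> real \<Rightarrow> (real \<Rightarrow> real)
    \<Rightarrow> (nat \<Rightarrow> nat \<Rightarrow> real^'d) \<Rightarrow> (nat \<Rightarrow> nat \<Rightarrow> real^'d) \<Rightarrow> bool" where
  "MT_solution N h \<kappa> a x v \<longleftrightarrow>
     (\<forall>n. \<forall>i<N. x (Suc n) i = x n i + h *\<^sub>R v n i \<and>
        v (Suc n) i = v n i + (h * \<kappa>) *\<^sub>R (\<Sum>j<N. MT_phi N a (x n) i j *\<^sub>R (v n j - v n i)))"

definition phi_Lip :: "nat \<Rightarrow> real \<Rightarrow> real \<Rightarrow> real \<Rightarrow> real" where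
  "phi_Lip N La c1 c2 = La / (real N * c1) * (1 + c2 / c1)"

definition MT_M :: "nat \<Rightarrow> real \<Rightarrow> real \<Rightarrow> real \<Rightarrow> real" where
  "MT_M N La c1 c2 = 1 / (4 * real N * phi_Lip N La c1 c2)"

definition MT_psi :: "nat \<Rightarrow> real \<Rightarrow> real \<Rightarrow> real \<Rightarrow> real \<Rightarrow> real" where
  "MT_psi N La c1 c2 s = 1 - phi_Lip N La c1 c2 * real N * s"

end

theory Submission
  imports Defs
begin

(* First, an a priori bound on the barred positions: with D and V the Frobenius
   diameters of positions and velocities and Psi an antiderivative of psi, the functional
   V + kappa Psi(D) does not increase while D < M, and D cannot jump past M in one step because
   Psi increases on [0, 4M]; so D(n) < M for all n. Second, the cocycle identity
   u_lj = u_li + u_ij for u = Delta^v - Delta^vbar splits I_2^ij into the weight differences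
   (phi_il - phi_jl) u_li, which the Lipschitz bound |phi_il - phi_jl| <= |phi|_Lip |x_i - x_j|
   controls by |phi|_Lip^2 N M^2 |u|_F^2, minus (1 - phi_ji - phi_jj) u_ij, controlled by alpha. *)

lemma frobF_nonneg: "0 \<le> frobF N A"
  unfolding frobF_def by (simp add: sum_nonneg)

lemma frobF_sq: "(frobF N A)\<^sup>2 = (\<Sum>i<N. \<Sum>j<N. (norm (A i j))\<^sup>2)"
  unfolding frobF_def by (simp add: sum_nonneg)

lemma frobF_eq_L2_set: "frobF N A = L2_set (\<lambda>p. norm (A (fst p) (snd p))) ({..<N} \<times> {..<N})"
  unfolding frobF_def L2_set_def by (simp add: sum.cartesian_product case_prod_beta)

lemma frobF_scaleR: "frobF N (\<lambda>i j. c *\<^sub>R A i j) = \<bar>c\<bar> * frobF N A"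
  unfolding frobF_def
  by (simp add: power_mult_distrib real_sqrt_mult flip: sum_distrib_left)

lemma frobF_triangle_weighted:
  assumes "\<And>i j. i < N \<Longrightarrow> j < N \<Longrightarrow> norm (C i j) \<le> s * norm (A i j) + t * norm (B i j)"
    and "0 \<le> s" "0 \<le> t"
  shows "frobF N C \<le> s * frobF N A + t * frobF N B"
proof -
  let ?I = "{..<N} \<times> {..<N}"
  let ?a = "\<lambda>p. s * norm (A (fst p) (snd p))" and ?b = "\<lambda>p. t * norm (B (fst p) (snd p))"
  have "frobF N C \<le> L2_set (\<lambda>p. ?a p + ?b p) ?I"
    unfolding frobF_eq_L2_set by (rule L2_set_mono) (use assms in auto)
  also have "\<dots> \<le> L2_set ?a ?I + L2_set ?b ?I"
    by (rule L2_set_triangle_ineq)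
  also have "\<dots> = s * frobF N A + t * frobF N B"
    unfolding frobF_eq_L2_set using assms by (simp add: L2_set_right_distrib)
  finally show ?thesis .
qed

lemma frobF_diff_sq_le:
  "(frobF N (\<lambda>i j. A i j - B i j))\<^sup>2 \<le> 2 * (frobF N A)\<^sup>2 + 2 * (frobF N B)\<^sup>2"
proof -
  have "frobF N (\<lambda>i j. A i j - B i j) \<le> 1 * frobF N A + 1 * frobF N B"
    by (rule frobF_triangle_weighted) (auto intro: norm_triangle_ineq4)
  then have "(frobF N (\<lambda>i j. A i j - B i j))\<^sup>2 \<le> (frobF N A + frobF N B)\<^sup>2"
    by (intro power_mono) (auto simp: frobF_nonneg)
  also have "\<dots> \<le> 2 * (frobF N A)\<^sup>2 + 2 * (frobF N B)\<^sup>2"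
    using zero_le_power2[of "frobF N A - frobF N B"] by (simp add: power2_eq_square algebra_simps)
  finally show ?thesis .
qed

lemma column_sum_sq_le_frobF_sq:
  assumes "i < N"
  shows "(\<Sum>l<N. (norm (w l i))\<^sup>2) \<le> (frobF N w)\<^sup>2"
  unfolding frobF_sq using assms by (intro sum_mono member_le_sum) auto

lemma frobF_sq_le_row_bound:
  assumes bound: "\<And>i j. i < N \<Longrightarrow> j < N \<Longrightarrow> norm (E i j) \<le> c * norm (D i j) * (\<Sum>l<N. norm (w l i))"
    and "0 \<le> c"
  shows "(frobF N E)\<^sup>2 \<le> c\<^sup>2 * real N * (frobF N D)\<^sup>2 * (frobF N w)\<^sup>2"
proof -
  have pointwise: "(norm (E i j))\<^sup>2 \<le> c\<^sup>2 * real N * (norm (D i j))\<^sup>2 * (frobF N w)\<^sup>2"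
    if "i < N" "j < N" for i j
  proof -
    have "(norm (E i j))\<^sup>2 \<le> (c * norm (D i j))\<^sup>2 * (\<Sum>l<N. norm (w l i))\<^sup>2"
      using power_mono[OF bound[OF that]] by (simp add: power_mult_distrib)
    also have "\<dots> \<le> (c * norm (D i j))\<^sup>2 * ((\<Sum>l<N. (norm (w l i))\<^sup>2) * real N)"
      using sum_squared_le_sum_of_squares[of "\<lambda>l. norm (w l i)" "{..<N}"]
      by (intro mult_left_mono) auto
    also have "\<dots> \<le> (c * norm (D i j))\<^sup>2 * ((frobF N w)\<^sup>2 * real N)"
      using column_sum_sq_le_frobF_sq[OF that(1)] by (intro mult_left_mono mult_right_mono) auto
    finally show ?thesis by (simp add: power_mult_distrib mult_ac)
  qed
  have "(frobF N E)\<^sup>2 \<le> (\<Sum>i<N. \<Sum>j<N. c\<^sup>2 * real N * (norm (D i j))\<^sup>2 * (frobF N w)\<^sup>2)"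
    unfolding frobF_sq[of N E] by (intro sum_mono pointwise) auto
  also have "\<dots> = c\<^sup>2 * real N * (frobF N D)\<^sup>2 * (frobF N w)\<^sup>2"
    by (simp add: frobF_sq sum_distrib_left sum_distrib_right mult_ac)
  finally show ?thesis .
qed

lemma abs_divide_diff_le:
  fixes p q A B m e E c :: real
  assumes "0 < m" "m \<le> A" "m \<le> B" "0 \<le> q" "q \<le> c" "\<bar>p - q\<bar> \<le> e" "\<bar>A - B\<bar> \<le> E"
  shows "\<bar>p / A - q / B\<bar> \<le> e / m + c * E / m\<^sup>2"
proof -
  have "p / A - q / B = (p - q) / A + q * (B - A) / (A * B)"
    using assms by (simp add: field_simps)
  then have "\<bar>p / A - q / B\<bar> \<le> \<bar>(p - q) / A\<bar> + \<bar>q * (B - A) / (A * B)\<bar>"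
    by (simp only: abs_triangle_ineq)
  moreover have "\<bar>(p - q) / A\<bar> \<le> e / m"
    using assms by (simp add: frac_le)
  moreover have "\<bar>q * (B - A) / (A * B)\<bar> \<le> c * E / m\<^sup>2"
  proof -
    have "\<bar>q * (B - A) / (A * B)\<bar> = q * \<bar>A - B\<bar> / (A * B)"
      using assms by (simp add: abs_mult abs_minus_commute)
    also have "\<dots> \<le> c * E / (m * m)"
      using assms by (intro frac_le mult_mono) auto
    finally show ?thesis by (simp add: power2_eq_square)
  qed
  ultimately show ?thesis by linarith
qed

(* With K = phi_Lip * N this is an antiderivative of MT_psi. *)
definition Psi :: "real \<Rightarrow> real \<Rightarrow> real" where
  "Psi K s = s - K * s\<^sup>2 / 2"

lemma Psi_diff: "Psi K t - Psi K s = (t - s) * (1 - K * (s + t) / 2)"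
  unfolding Psi_def by (simp add: field_simps power2_eq_square)

lemma integral_affine_eq_Psi_diff:
  fixes s t K :: real
  assumes "s \<le> t"
  shows "integral {s..t} (\<lambda>r. 1 - K * r) = Psi K t - Psi K s"
proof (rule integral_unique, rule fundamental_theorem_of_calculus[OF assms])
  fix r :: real
  have "(Psi K has_real_derivative (1 - K * r)) (at r within {s..t})"
    unfolding Psi_def[abs_def] by (auto intro!: derivative_eq_intros)
  then show "(Psi K has_vector_derivative (1 - K * r)) (at r within {s..t})"
    by (simp add: has_real_derivative_iff_has_vector_derivative)
qed

lemma Psi_mono:
  assumes "s \<le> t" "K * (s + t) \<le> 2"
  shows "Psi K s \<le> Psi K t"
proof -
  have "0 \<le> (t - s) * (1 - K * (s + t) / 2)"
    using assms by (intro mult_nonneg_nonneg) auto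
  then show ?thesis
    using Psi_diff[of K t s] by linarith
qed

lemma Psi_increment_le:
  assumes "0 \<le> K" "K * s \<le> 1" "t \<le> s + d" "0 \<le> d"
  shows "Psi K t - Psi K s \<le> d * (1 - K * s)"
proof (cases "s \<le> t")
  case True
  have "(t - s) * (1 - K * (s + t) / 2) \<le> (t - s) * (1 - K * s)"
    using True assms(1) by (intro mult_left_mono) (auto simp: algebra_simps mult_left_mono)
  also have "\<dots> \<le> d * (1 - K * s)"
    using assms by (intro mult_right_mono) auto
  finally show ?thesis
    by (simp only: Psi_diff)
next
  case False
  then have "K * t \<le> K * s"
    using assms(1) by (simp add: mult_left_mono)
  then have "(t - s) * (1 - K * (s + t) / 2) \<le> 0"
    using False assms(2) by (intro mult_nonpos_nonneg) (auto simp: algebra_simps)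
  moreover have "0 \<le> d * (1 - K * s)"
    using assms by simp
  ultimately show ?thesis
    by (simp add: Psi_diff)
qed

lemma Lyapunov_step:
  fixes K M \<kappa> h D V D' V' :: real
  assumes K: "0 < K" "K * M = 1 / 4" and \<kappa>: "0 < \<kappa>" and h: "0 \<le> h" "h * \<kappa> \<le> 1"
    and D: "0 \<le> D" "D < M" "D' \<le> D + h * V" and V: "0 \<le> V" "0 \<le> V'"
    and V': "V' \<le> (1 - h * \<kappa>) * V + h * \<kappa> * (K * D * V)"
    and L: "V + \<kappa> * Psi K D < \<kappa> * Psi K M"
  shows "D' < M \<and> V' + \<kappa> * Psi K D' < \<kappa> * Psi K M"
proof -
  have KD: "K * D \<le> 1 / 4"
    using K D by (metis less_imp_le mult_left_mono)
  then have "Psi K D' - Psi K D \<le> h * V * (1 - K * D)"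
    using K D h V by (intro Psi_increment_le) auto
  then have "\<kappa> * (Psi K D' - Psi K D) \<le> \<kappa> * (h * V * (1 - K * D))"
    using \<kappa> by (simp add: mult_left_mono)
  moreover have "\<kappa> * (Psi K D' - Psi K D) = \<kappa> * Psi K D' - \<kappa> * Psi K D"
    by (rule right_diff_distrib)
  moreover have "\<kappa> * (h * V * (1 - K * D)) = V - ((1 - h * \<kappa>) * V + h * \<kappa> * (K * D * V))"
    by (simp add: algebra_simps)
  ultimately have L': "V' + \<kappa> * Psi K D' < \<kappa> * Psi K M"
    using V' L by linarith
  have "0 \<le> \<kappa> * Psi K D"
    using Psi_mono[of 0 D K] KD D \<kappa> by (simp add: Psi_def)
  moreover have "\<kappa> * Psi K M \<le> \<kappa> * M"
    using K \<kappa> by (simp add: Psi_def)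
  ultimately have "V \<le> \<kappa> * M"
    using L by linarith
  then have "h * V \<le> (h * \<kappa>) * M"
    using h by (simp add: mult_left_mono mult.assoc)
  also have "\<dots> \<le> M"
    using h D by (simp add: mult_left_le_one_le)
  finally have "h * V \<le> M" .
  show ?thesis
  proof (intro conjI L')
    show "D' < M"
    proof (rule ccontr)
      assume "\<not> D' < M"
      have "K * (M + D') \<le> K * (3 * M)"
        using K D \<open>h * V \<le> M\<close> by (intro mult_left_mono) auto
      also have "\<dots> \<le> 2"
        using K(2) by simp
      finally have "Psi K M \<le> Psi K D'"
        using \<open>\<not> D' < M\<close> by (intro Psi_mono) auto
      then have "\<kappa> * Psi K M \<le> \<kappa> * Psi K D'"
        using \<kappa> by (simp add: mult_left_mono)
      then show False
        using L' V by linarith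
    qed
  qed
qed

lemma frobF_Delta_position_step:
  assumes "MT_solution N h \<kappa> a x v" "0 \<le> h"
  shows "frobF N (Delta (x (Suc n))) \<le> frobF N (Delta (x n)) + h * frobF N (Delta (v n))"
proof -
  have "frobF N (Delta (x (Suc n))) \<le> 1 * frobF N (Delta (x n)) + h * frobF N (Delta (v n))"
  proof (rule frobF_triangle_weighted)
    fix i j assume "i < N" "j < N"
    then have "Delta (x (Suc n)) i j = Delta (x n) i j + h *\<^sub>R Delta (v n) i j"
      using assms(1) unfolding MT_solution_def Delta_def by (simp add: algebra_simps)
    then show "norm (Delta (x (Suc n)) i j) \<le> 1 * norm (Delta (x n) i j) + h * norm (Delta (v n) i j)"
      using norm_triangle_ineq[of "Delta (x n) i j" "h *\<^sub>R Delta (v n) i j"] assms(2) by simp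
  qed (use assms(2) in auto)
  then show ?thesis
    by simp
qed

locale MT_weights =
  fixes N :: nat and a :: "real \<Rightarrow> real" and c1 c2 La :: real
  assumes N_pos: "N \<ge> 1"
    and c1_pos: "0 < c1"
    and a_bounds: "\<And>r. r \<ge> 0 \<Longrightarrow> c1 \<le> a r \<and> a r \<le> c2"
    and a_Lipschitz: "\<And>r1 r2. r1 \<ge> 0 \<Longrightarrow> r2 \<ge> 0 \<Longrightarrow> \<bar>a r1 - a r2\<bar> \<le> La * \<bar>r1 - r2\<bar>"
begin

lemma La_nonneg: "0 \<le> La"
  using a_Lipschitz[of 1 0] abs_ge_zero[of "a 1 - a 0"] by simp

lemma c2_pos: "0 < c2"
  using a_bounds[of 0] c1_pos by simp

lemma phi_Lip_nonneg: "0 \<le> phi_Lip N La c1 c2"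
  unfolding phi_Lip_def using La_nonneg c1_pos c2_pos by simp

lemma phi_Lip_pos: "0 < La \<Longrightarrow> 0 < phi_Lip N La c1 c2"
  unfolding phi_Lip_def using N_pos c1_pos c2_pos by (simp add: add_pos_pos)

lemma sum_a_ge: "real N * c1 \<le> (\<Sum>k<N. a (norm (y i - y k)))"
  using sum_mono[of "{..<N}" "\<lambda>_. c1" "\<lambda>k. a (norm (y i - y k))"] a_bounds by simp

lemma sum_MT_phi: "(\<Sum>l<N. MT_phi N a y i l) = 1"
proof -
  have "0 < real N * c1"
    using N_pos c1_pos by simp
  then have "(\<Sum>k<N. a (norm (y i - y k))) \<noteq> 0"
    using sum_a_ge[of y i] by linarith
  then show ?thesis
    unfolding MT_phi_def by (simp flip: sum_divide_distrib)
qed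

lemma sum_MT_phi_off_pair:
  assumes "i < N" "j < N" "i \<noteq> j"
  shows "(\<Sum>l\<in>{..<N} - {i, j}. MT_phi N a y j l) = 1 - MT_phi N a y j i - MT_phi N a y j j"
proof -
  have "(\<Sum>l<N. MT_phi N a y j l)
      = (\<Sum>l\<in>{..<N} - {i, j}. MT_phi N a y j l) + (\<Sum>l\<in>{i, j}. MT_phi N a y j l)"
    using assms by (intro sum.subset_diff) auto
  then show ?thesis
    using sum_MT_phi[of y j] assms(3) by simp
qed

lemma a_norm_diff_le: "\<bar>a (norm (y i - y k)) - a (norm (y j - y k))\<bar> \<le> La * norm (y i - y j)"
proof -
  have "\<bar>norm (y i - y k) - norm (y j - y k)\<bar> \<le> norm (y i - y j)"
    using norm_triangle_ineq3[of "y i - y k" "y j - y k"] by simp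
  then show ?thesis
    using a_Lipschitz[of "norm (y i - y k)" "norm (y j - y k)"] La_nonneg
    by (meson mult_left_mono norm_ge_zero order_trans)
qed

lemma MT_phi_Lipschitz:
  "\<bar>MT_phi N a y i l - MT_phi N a y j l\<bar> \<le> phi_Lip N La c1 c2 * norm (y i - y j)"
proof -
  let ?d = "norm (y i - y j)"
  have "\<bar>(\<Sum>k<N. a (norm (y i - y k))) - (\<Sum>k<N. a (norm (y j - y k)))\<bar>
      \<le> (\<Sum>k<N. \<bar>a (norm (y i - y k)) - a (norm (y j - y k))\<bar>)"
    by (simp only: flip: sum_subtractf) (rule sum_abs)
  also have "\<dots> \<le> (\<Sum>k<N. La * ?d)"
    by (intro sum_mono a_norm_diff_le)
  finally have "\<bar>(\<Sum>k<N. a (norm (y i - y k))) - (\<Sum>k<N. a (norm (y j - y k)))\<bar>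
      \<le> real N * (La * ?d)"
    by simp
  moreover have "0 \<le> a (norm (y j - y l))" "a (norm (y j - y l)) \<le> c2"
    using a_bounds[of "norm (y j - y l)"] c1_pos by auto
  ultimately have "\<bar>MT_phi N a y i l - MT_phi N a y j l\<bar>
      \<le> La * ?d / (real N * c1) + c2 * (real N * (La * ?d)) / (real N * c1)\<^sup>2"
    unfolding MT_phi_def using N_pos c1_pos
    by (intro abs_divide_diff_le a_norm_diff_le sum_a_ge) auto
  also have "\<dots> = phi_Lip N La c1 c2 * ?d"
    unfolding phi_Lip_def using N_pos c1_pos by (simp add: field_simps power2_eq_square)
  finally show ?thesis .
qed

lemma frobF_phi_diff_sum_sq_le:
  assumes "\<And>i j. S i j \<subseteq> {..<N}"
  shows "(frobF N (\<lambda>i j. \<Sum>l\<in>S i j. (MT_phi N a y i l - MT_phi N a y j l) *\<^sub>R w l i))\<^sup>2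
    \<le> (phi_Lip N La c1 c2)\<^sup>2 * real N * (frobF N (Delta y))\<^sup>2 * (frobF N w)\<^sup>2"
proof (rule frobF_sq_le_row_bound[OF _ phi_Lip_nonneg])
  fix i j
  let ?L = "phi_Lip N La c1 c2 * norm (Delta y i j)"
  have "norm (\<Sum>l\<in>S i j. (MT_phi N a y i l - MT_phi N a y j l) *\<^sub>R w l i)
      \<le> (\<Sum>l\<in>S i j. \<bar>MT_phi N a y i l - MT_phi N a y j l\<bar> * norm (w l i))"
    by (rule order_trans[OF norm_sum]) simp
  also have "\<dots> \<le> (\<Sum>l\<in>S i j. ?L * norm (w l i))"
    unfolding Delta_def by (intro sum_mono mult_right_mono MT_phi_Lipschitz) auto
  also have "\<dots> \<le> (\<Sum>l<N. ?L * norm (w l i))"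
    using assms phi_Lip_nonneg by (intro sum_mono2) auto
  finally show "norm (\<Sum>l\<in>S i j. (MT_phi N a y i l - MT_phi N a y j l) *\<^sub>R w l i)
      \<le> phi_Lip N La c1 c2 * norm (Delta y i j) * (\<Sum>l<N. norm (w l i))"
    by (simp add: sum_distrib_left)
qed

lemma Delta_velocity_step:
  assumes sol: "MT_solution N h \<kappa> a x v" and "i < N" "j < N"
  shows "Delta (v (Suc n)) i j = (1 - h * \<kappa>) *\<^sub>R Delta (v n) i j
    + (h * \<kappa>) *\<^sub>R (\<Sum>l<N. (MT_phi N a (x n) i l - MT_phi N a (x n) j l) *\<^sub>R Delta (v n) l i)"
proof -
  let ?\<phi> = "MT_phi N a (x n)"
  define Si where "Si = (\<Sum>l<N. ?\<phi> i l *\<^sub>R (v n l - v n i))"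
  define Sj where "Sj = (\<Sum>l<N. ?\<phi> j l *\<^sub>R (v n l - v n i))"
  have recentre: "(\<Sum>l<N. ?\<phi> j l *\<^sub>R (v n l - v n j)) = Sj + (v n i - v n j)"
  proof -
    have "(\<Sum>l<N. ?\<phi> j l *\<^sub>R (v n l - v n j)) = Sj + (\<Sum>l<N. ?\<phi> j l) *\<^sub>R (v n i - v n j)"
      unfolding Sj_def by (simp add: scaleR_sum_left algebra_simps flip: sum.distrib)
    then show ?thesis
      by (simp add: sum_MT_phi)
  qed
  have vi: "v (Suc n) i = v n i + (h * \<kappa>) *\<^sub>R Si"
    using sol assms(2) unfolding MT_solution_def Si_def by simp
  have vj: "v (Suc n) j = v n j + (h * \<kappa>) *\<^sub>R (Sj + (v n i - v n j))"
    using sol assms(3) recentre unfolding MT_solution_def by simp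
  have E: "(\<Sum>l<N. (?\<phi> i l - ?\<phi> j l) *\<^sub>R Delta (v n) l i) = Si - Sj"
    unfolding Si_def Sj_def Delta_def by (simp add: scaleR_diff_left sum_subtractf)
  show ?thesis
    unfolding E by (simp add: Delta_def vi vj algebra_simps)
qed

lemma frobF_Delta_velocity_step:
  assumes sol: "MT_solution N h \<kappa> a x v" and hk: "0 \<le> h * \<kappa>" "h * \<kappa> \<le> 1"
  shows "frobF N (Delta (v (Suc n))) \<le> (1 - h * \<kappa>) * frobF N (Delta (v n))
    + h * \<kappa> * (phi_Lip N La c1 c2 * real N * frobF N (Delta (x n)) * frobF N (Delta (v n)))"
proof -
  define E where "E = (\<lambda>i j. \<Sum>l<N. (MT_phi N a (x n) i l - MT_phi N a (x n) j l) *\<^sub>R Delta (v n) l i)"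
  let ?L = "phi_Lip N La c1 c2" and ?D = "frobF N (Delta (x n))" and ?V = "frobF N (Delta (v n))"
  have "(frobF N E)\<^sup>2 \<le> ?L\<^sup>2 * real N * ?D\<^sup>2 * ?V\<^sup>2"
    unfolding E_def by (rule frobF_phi_diff_sum_sq_le) simp
  also have "\<dots> \<le> ?L\<^sup>2 * (real N)\<^sup>2 * ?D\<^sup>2 * ?V\<^sup>2"
    using N_pos by (intro mult_right_mono mult_left_mono) (auto simp: power2_eq_square)
  also have "\<dots> = (?L * real N * ?D * ?V)\<^sup>2"
    by (simp add: power_mult_distrib)
  finally have E: "frobF N E \<le> ?L * real N * ?D * ?V"
    by (rule power2_le_imp_le) (simp add: phi_Lip_nonneg frobF_nonneg)
  have "frobF N (Delta (v (Suc n))) \<le> (1 - h * \<kappa>) * ?V + h * \<kappa> * frobF N E"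
  proof (rule frobF_triangle_weighted)
    fix i j assume ij: "i < N" "j < N"
    show "norm (Delta (v (Suc n)) i j) \<le> (1 - h * \<kappa>) * norm (Delta (v n) i j) + h * \<kappa> * norm (E i j)"
      unfolding Delta_velocity_step[OF sol ij]
      using norm_triangle_ineq[of "(1 - h * \<kappa>) *\<^sub>R Delta (v n) i j" "(h * \<kappa>) *\<^sub>R E i j"] hk
      by (simp add: E_def)
  qed (use hk in auto)
  also have "\<dots> \<le> (1 - h * \<kappa>) * ?V + h * \<kappa> * (?L * real N * ?D * ?V)"
    using E hk by (intro add_left_mono mult_left_mono) auto
  finally show ?thesis .
qed

lemma frobF_Delta_position_lt_MT_M:
  assumes "0 < La" "0 < \<kappa>" "0 < h" "h * \<kappa> \<le> 1"
    and sol: "MT_solution N h \<kappa> a x v"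
    and x0: "frobF N (Delta (x 0)) < MT_M N La c1 c2"
    and v0: "frobF N (Delta (v 0)) < \<kappa> * integral {frobF N (Delta (x 0)) .. MT_M N La c1 c2} (MT_psi N La c1 c2)"
  shows "frobF N (Delta (x n)) < MT_M N La c1 c2"
proof -
  define K where "K = phi_Lip N La c1 c2 * real N"
  define M where "M = MT_M N La c1 c2"
  have K: "0 < K" "K * M = 1 / 4"
    using phi_Lip_pos[OF assms(1)] N_pos unfolding K_def M_def MT_M_def by (auto simp: field_simps)
  have psi: "MT_psi N La c1 c2 = (\<lambda>s. 1 - K * s)"
    unfolding K_def MT_psi_def by (simp add: mult_ac)
  have "frobF N (Delta (x m)) < M \<and> frobF N (Delta (v m)) + \<kappa> * Psi K (frobF N (Delta (x m))) < \<kappa> * Psi K M"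
    for m
  proof (induction m)
    case 0
    have "integral {frobF N (Delta (x 0)) .. M} (MT_psi N La c1 c2) = Psi K M - Psi K (frobF N (Delta (x 0)))"
      unfolding psi using x0 M_def by (intro integral_affine_eq_Psi_diff) simp
    then show ?case
      using x0 v0 unfolding M_def[symmetric] by (simp add: right_diff_distrib)
  next
    case (Suc m)
    show ?case
    proof (rule Lyapunov_step[OF K assms(2) _ assms(4)])
      show "frobF N (Delta (x (Suc m))) \<le> frobF N (Delta (x m)) + h * frobF N (Delta (v m))"
        using frobF_Delta_position_step[OF sol] assms(3) by simp
      show "frobF N (Delta (v (Suc m))) \<le> (1 - h * \<kappa>) * frobF N (Delta (v m))
          + h * \<kappa> * (K * frobF N (Delta (x m)) * frobF N (Delta (v m)))"
        using frobF_Delta_velocity_step[OF sol] assms(2-4) unfolding K_def by (simp add: mult_ac)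
    qed (use Suc assms(3) in \<open>auto simp: frobF_nonneg\<close>)
  qed
  then show ?thesis
    unfolding M_def by blast
qed

lemma off_pair_alignment_frobF_sq_le:
  fixes y w :: "nat \<Rightarrow> real^'d"
  assumes "frobF N (Delta y) \<le> R"
  shows "(frobF N (\<lambda>i j. \<Sum>l\<in>{..<N} - {i, j}.
      MT_phi N a y i l *\<^sub>R Delta w l i - MT_phi N a y j l *\<^sub>R Delta w l j))\<^sup>2
    \<le> 2 * (Max ((\<lambda>(i, j). (1 - MT_phi N a y i j - MT_phi N a y i i)\<^sup>2) ` ({..<N} \<times> {..<N}))
      + (phi_Lip N La c1 c2)\<^sup>2 * real N * R\<^sup>2) * (frobF N (Delta w))\<^sup>2"
proof -
  define \<phi> where "\<phi> = MT_phi N a y"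
  define S where "S = (\<lambda>i j. {..<N} - {i, j})"
  define A where "A = (\<lambda>i j. \<Sum>l\<in>S i j. (\<phi> i l - \<phi> j l) *\<^sub>R Delta w l i)"
  define \<beta> where "\<beta> = (\<lambda>i j. \<Sum>l\<in>S i j. \<phi> j l)"
  define \<alpha> where "\<alpha> = Max ((\<lambda>(i, j). (1 - \<phi> i j - \<phi> i i)\<^sup>2) ` ({..<N} \<times> {..<N}))"
  let ?L = "phi_Lip N La c1 c2" and ?U = "frobF N (Delta w)"
  have split:
    "(\<Sum>l\<in>S i j. \<phi> i l *\<^sub>R Delta w l i - \<phi> j l *\<^sub>R Delta w l j) = A i j - \<beta> i j *\<^sub>R Delta w i j"
    for i j
  proof -
    have "(\<Sum>l\<in>S i j. \<phi> i l *\<^sub>R Delta w l i - \<phi> j l *\<^sub>R Delta w l j)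
        = (\<Sum>l\<in>S i j. (\<phi> i l - \<phi> j l) *\<^sub>R Delta w l i - \<phi> j l *\<^sub>R Delta w i j)"
      by (intro sum.cong) (auto simp: Delta_def algebra_simps)
    then show ?thesis
      by (simp add: A_def \<beta>_def sum_subtractf scaleR_sum_left)
  qed
  have "(frobF N A)\<^sup>2 \<le> ?L\<^sup>2 * real N * (frobF N (Delta y))\<^sup>2 * ?U\<^sup>2"
    unfolding A_def \<phi>_def by (rule frobF_phi_diff_sum_sq_le) (simp add: S_def)
  also have "\<dots> \<le> ?L\<^sup>2 * real N * R\<^sup>2 * ?U\<^sup>2"
    using assms by (intro mult_right_mono mult_left_mono power_mono) (auto simp: frobF_nonneg)
  finally have A: "(frobF N A)\<^sup>2 \<le> ?L\<^sup>2 * real N * R\<^sup>2 * ?U\<^sup>2" .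
  have \<beta>: "(frobF N (\<lambda>i j. \<beta> i j *\<^sub>R Delta w i j))\<^sup>2 \<le> \<alpha> * ?U\<^sup>2"
  proof -
    have "(norm (\<beta> i j *\<^sub>R Delta w i j))\<^sup>2 \<le> \<alpha> * (norm (Delta w i j))\<^sup>2" if "i < N" "j < N" for i j
    proof (cases "i = j")
      case False
      then have "\<beta> i j = 1 - \<phi> j i - \<phi> j j"
        unfolding \<beta>_def S_def \<phi>_def by (rule sum_MT_phi_off_pair[OF that])
      then have "(\<beta> i j)\<^sup>2 \<le> \<alpha>"
        unfolding \<alpha>_def using that by (intro Max_ge) force+
      then show ?thesis
        by (simp add: power_mult_distrib mult_right_mono)
    qed (simp add: Delta_def)
    then show ?thesis
      unfolding frobF_sq by (auto simp: sum_distrib_left intro!: sum_mono)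
  qed
  have "(frobF N (\<lambda>i j. \<Sum>l\<in>S i j. \<phi> i l *\<^sub>R Delta w l i - \<phi> j l *\<^sub>R Delta w l j))\<^sup>2
      \<le> 2 * (frobF N A)\<^sup>2 + 2 * (frobF N (\<lambda>i j. \<beta> i j *\<^sub>R Delta w i j))\<^sup>2"
    unfolding split by (rule frobF_diff_sq_le)
  also have "\<dots> \<le> 2 * (\<alpha> + ?L\<^sup>2 * real N * R\<^sup>2) * ?U\<^sup>2"
    using A \<beta> by (simp add: algebra_simps)
  finally show ?thesis
    unfolding \<phi>_def S_def \<alpha>_def .
qed

lemma phi_Lip_sq_mult_N:
  "(phi_Lip N La c1 c2)\<^sup>2 * real N * R\<^sup>2 = La\<^sup>2 * R\<^sup>2 / (real N * c1\<^sup>2) * (1 + c2 / c1)\<^sup>2"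
  unfolding phi_Lip_def using N_pos c1_pos by (simp add: field_simps power2_eq_square)

end

theorem lemma4p5:
  fixes N :: nat and h \<kappa> c1 c2 La :: real and a :: "real \<Rightarrow> real"
    and x v xb vb :: "nat \<Rightarrow> nat \<Rightarrow> real^'d"
  assumes N: "N \<ge> 1"
    and kappa: "\<kappa> > 0"
    and h: "0 < h" "h < min 1 (1 / \<kappa>)"
    and c: "0 < c1" "c1 \<le> c2"
    and a_bd: "\<And>r. r \<ge> 0 \<Longrightarrow> c1 \<le> a r \<and> a r \<le> c2"
    and La: "La > 0"
    and a_Lip: "\<And>r1 r2. r1 \<ge> 0 \<Longrightarrow> r2 \<ge> 0 \<Longrightarrow> \<bar>a r1 - a r2\<bar> \<le> La * \<bar>r1 - r2\<bar>"
    and sol: "MT_solution N h \<kappa> a x v"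
    and solb: "MT_solution N h \<kappa> a xb vb"
    and init_x: "max (frobF N (Delta (x 0))) (frobF N (Delta (xb 0))) < MT_M N La c1 c2"
    and init_v: "frobF N (Delta (v 0)) <
        \<kappa> * integral {frobF N (Delta (x 0)) .. MT_M N La c1 c2} (MT_psi N La c1 c2)"
    and init_vb: "frobF N (Delta (vb 0)) <
        \<kappa> * integral {frobF N (Delta (xb 0)) .. MT_M N La c1 c2} (MT_psi N La c1 c2)"
  shows "(\<Sum>i<N. \<Sum>j<N. (norm (
            (h * \<kappa>) *\<^sub>R (\<Sum>l\<in>{..<N} - {i, j}.
               MT_phi N a (xb n) i l *\<^sub>R (Delta (v n) l i - Delta (vb n) l i)
             - MT_phi N a (xb n) j l *\<^sub>R (Delta (v n) l j - Delta (vb n) l j))))\<^sup>2)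
         \<le> 2 * h\<^sup>2 * \<kappa>\<^sup>2 *
            (Max ((\<lambda>(i, j). (1 - MT_phi N a (xb n) i j - MT_phi N a (xb n) i i)\<^sup>2) ` ({..<N} \<times> {..<N}))
             + La\<^sup>2 * (MT_M N La c1 c2)\<^sup>2 / (real N * c1\<^sup>2) * (1 + c2 / c1)\<^sup>2)
          * (frobF N (\<lambda>i j. Delta (v n) i j - Delta (vb n) i j))\<^sup>2"
proof -
  interpret MT_weights N a c1 c2 La
    using N c(1) a_bd a_Lip by unfold_locales
  let ?M = "MT_M N La c1 c2"
  define w where "w = (\<lambda>k. v n k - vb n k)"
  have Delta_w: "Delta (v n) l i - Delta (vb n) l i = Delta w l i" for l i
    by (simp add: w_def Delta_def algebra_simps)
  have "h * \<kappa> < 1"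
    using h kappa by (simp add: field_simps)
  then have xb_bound: "frobF N (Delta (xb n)) \<le> ?M"
    using frobF_Delta_position_lt_MT_M[OF La kappa h(1) _ solb _ init_vb] init_x by (auto intro: less_imp_le)
  define F where "F = frobF N (\<lambda>i j. \<Sum>l\<in>{..<N} - {i, j}.
    MT_phi N a (xb n) i l *\<^sub>R Delta w l i - MT_phi N a (xb n) j l *\<^sub>R Delta w l j)"
  define \<alpha> where "\<alpha> = Max ((\<lambda>(i, j). (1 - MT_phi N a (xb n) i j - MT_phi N a (xb n) i i)\<^sup>2) ` ({..<N} \<times> {..<N}))"
  define X where "X = La\<^sup>2 * ?M\<^sup>2 / (real N * c1\<^sup>2) * (1 + c2 / c1)\<^sup>2"
  have "F\<^sup>2 \<le> 2 * (\<alpha> + X) * (frobF N (Delta w))\<^sup>2"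
    unfolding F_def \<alpha>_def X_def phi_Lip_sq_mult_N[symmetric]
    by (rule off_pair_alignment_frobF_sq_le) fact
  then have "(\<bar>h * \<kappa>\<bar> * F)\<^sup>2 \<le> (h * \<kappa>)\<^sup>2 * (2 * (\<alpha> + X) * (frobF N (Delta w))\<^sup>2)"
    by (simp add: power_mult_distrib mult_left_mono)
  also have "\<dots> = 2 * h\<^sup>2 * \<kappa>\<^sup>2 * (\<alpha> + X) * (frobF N (Delta w))\<^sup>2"
    by (simp add: power_mult_distrib)
  finally have bound: "(\<bar>h * \<kappa>\<bar> * F)\<^sup>2 \<le> 2 * h\<^sup>2 * \<kappa>\<^sup>2 * (\<alpha> + X) * (frobF N (Delta w))\<^sup>2" .
  show ?thesis
    unfolding Delta_w frobF_sq[symmetric] frobF_scaleR F_def[symmetric] \<alpha>_def[symmetric] X_def[symmetric]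
    by (rule bound)
qed

end
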